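(* Let $\mathfrak{g}$ be a nilpotent Lie algebra over $\mathbb{R}$ of dimension $2p+1$ admitting a contact form, i.e. a linear form $\omega\in\mathfrak{g}^*$ with $\omega\wedge(d\omega)^p\neq 0$, where $d\omega(X,Y)=-\omega([X,Y])$. Then $\mathfrak{g}$ is a one-dimensional central extension of a Lie algebra admitting an affine structure; that is, there is an exact sequence of Lie algebras $0\to V\to\mathfrak{g}\to\mathfrak{h}\to 0$ with $V$ one-dimensional and central in $\mathfrak{g}$, and $\mathfrak{h}$ admits an affine structure.
   Context: An affine structure on a Lie algebra $\mathfrak{h}$ over $\mathbb{R}$ is a bilinear map $\nabla:\mathfrak{h}\times\mathfrak{h}\to\mathfrak{h}$ such that for all $X,Y,Z\in\mathfrak{h}$: (1) $\nabla(X,Y)-\nabla(Y,X)=[X,Y]$, and (2) $\nabla(X,\nabla(Y,Z))-\nabla(Y,\nabla(X,Z))=\nabla([X,Y],Z)$. *)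

theory Defs
  imports "HOL-Analysis.Analysis"
begin

definition lie_algebra :: "('g::real_vector \<Rightarrow> 'g \<Rightarrow> 'g) \<Rightarrow> bool" where
  "lie_algebra br \<longleftrightarrow> bilinear br \<and> (\<forall>x. br x x = 0) \<and>
     (\<forall>x y z. br x (br y z) + br y (br z x) + br z (br x y) = 0)"

fun lcs :: "('g::real_vector \<Rightarrow> 'g \<Rightarrow> 'g) \<Rightarrow> nat \<Rightarrow> 'g set" where
  "lcs br 0 = UNIV"
| "lcs br (Suc k) = span {br x y | x y. y \<in> lcs br k}"

definition nilpotent_lie :: "('g::real_vector \<Rightarrow> 'g \<Rightarrow> 'g) \<Rightarrow> bool" where
  "nilpotent_lie br \<longleftrightarrow> (\<exists>k. lcs br k = {0})"

text \<open>Multilinear forms are represented as functions on lists of vectors.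
  Wedge product of a k-form and an l-form (standard normalisation).\<close>
definition wedge :: "nat \<Rightarrow> nat \<Rightarrow> ('g list \<Rightarrow> real) \<Rightarrow> ('g list \<Rightarrow> real) \<Rightarrow> ('g list \<Rightarrow> real)" where
  "wedge k l \<alpha> \<beta> vs =
     (\<Sum>\<sigma> | \<sigma> permutes {..<k+l}.
        of_int (sign \<sigma>) * \<alpha> (map (\<lambda>i. vs ! \<sigma> i) [0..<k])
                      * \<beta> (map (\<lambda>i. vs ! \<sigma> i) [k..<k+l]))
     / (fact k * fact l)"

fun wedge_pow2 :: "nat \<Rightarrow> ('g list \<Rightarrow> real) \<Rightarrow> ('g list \<Rightarrow> real)" where
  "wedge_pow2 0 \<eta> = (\<lambda>_. 1)"
| "wedge_pow2 (Suc n) \<eta> = wedge 2 (2*n) \<eta> (wedge_pow2 n \<eta>)"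

definition one_form :: "('g \<Rightarrow> real) \<Rightarrow> ('g list \<Rightarrow> real)" where
  "one_form \<omega> vs = \<omega> (vs ! 0)"

definition d_form :: "('g \<Rightarrow> 'g \<Rightarrow> 'g) \<Rightarrow> ('g \<Rightarrow> real) \<Rightarrow> ('g list \<Rightarrow> real)" where
  "d_form br \<omega> vs = - \<omega> (br (vs ! 0) (vs ! 1))"

definition contact_form :: "('g::real_vector \<Rightarrow> 'g \<Rightarrow> 'g) \<Rightarrow> nat \<Rightarrow> ('g \<Rightarrow> real) \<Rightarrow> bool" where
  "contact_form br p \<omega> \<longleftrightarrow> linear \<omega> \<and>
     (\<exists>vs. length vs = 2*p+1 \<and> wedge 1 (2*p) (one_form \<omega>) (wedge_pow2 p (d_form br \<omega>)) vs \<noteq> 0)"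

text \<open>Lie algebra structure on a linear subspace H (used as carrier of the quotient algebra).\<close>
definition lie_algebra_on :: "'g::real_vector set \<Rightarrow> ('g \<Rightarrow> 'g \<Rightarrow> 'g) \<Rightarrow> bool" where
  "lie_algebra_on H br \<longleftrightarrow> subspace H \<and>
     (\<forall>x\<in>H. \<forall>y\<in>H. br x y \<in> H) \<and>
     (\<forall>x\<in>H. \<forall>y\<in>H. \<forall>z\<in>H. \<forall>a b. br (a *\<^sub>R x + b *\<^sub>R y) z = a *\<^sub>R br x z + b *\<^sub>R br y z
                                   \<and> br z (a *\<^sub>R x + b *\<^sub>R y) = a *\<^sub>R br z x + b *\<^sub>R br z y) \<and>
     (\<forall>x\<in>H. br x x = 0) \<and>
     (\<forall>x\<in>H. \<forall>y\<in>H. \<forall>z\<in>H. br x (br y z) + br y (br z x) + br z (br x y) = 0)"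

definition affine_structure_on :: "'g::real_vector set \<Rightarrow> ('g \<Rightarrow> 'g \<Rightarrow> 'g) \<Rightarrow> ('g \<Rightarrow> 'g \<Rightarrow> 'g) \<Rightarrow> bool" where
  "affine_structure_on H br nab \<longleftrightarrow>
     (\<forall>x\<in>H. \<forall>y\<in>H. nab x y \<in> H) \<and>
     (\<forall>x\<in>H. \<forall>y\<in>H. \<forall>z\<in>H. \<forall>a b. nab (a *\<^sub>R x + b *\<^sub>R y) z = a *\<^sub>R nab x z + b *\<^sub>R nab y z
                                   \<and> nab z (a *\<^sub>R x + b *\<^sub>R y) = a *\<^sub>R nab z x + b *\<^sub>R nab z y) \<and>
     (\<forall>x\<in>H. \<forall>y\<in>H. nab x y - nab y x = br x y) \<and>
     (\<forall>x\<in>H. \<forall>y\<in>H. \<forall>z\<in>H. nab x (nab y z) - nab y (nab x z) = nab (br x y) z)"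

end

theory Submission
  imports Defs
begin

text \<open>Nilpotency provides a nonzero central vector \<open>z\<close>, which therefore lies in the radical
  of \<open>d\<omega>\<close>. A nonzero \<open>h\<close> with \<open>\<omega> h = 0\<close> in that radical would make
  \<open>\<omega> \<and> (d\<omega>)\<^sup>p\<close> vanish on every tuple containing \<open>h\<close>, which is impossible for a
  nonzero alternating form of top degree. Hence \<open>\<omega> z \<noteq> 0\<close> and the radical of \<open>d\<omega>\<close>
  is exactly \<open>\<real>z\<close>, so \<open>\<Omega>(a, w) = \<omega> [a, w]\<close> descends to a symplectic form on
  \<open>\<hh> = \<gg>/\<real>z\<close>. A symplectic Lie algebra carries the affine structure defined by
  \<open>\<Omega>(\<nabla>\<^sub>x y, w) = - \<Omega>(y, [x, w])\<close>; torsion-freeness and flatness both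
  reduce to the Jacobi identity.\<close>

locale lie_bracket =
  fixes br :: "'g::real_vector \<Rightarrow> 'g \<Rightarrow> 'g"
  assumes lie_algebra: "lie_algebra br"
begin

lemma bilinear: "bilinear br"
  using lie_algebra unfolding lie_algebra_def by blast

lemma linear_bracket_right: "linear (br x)"
  using bilinear unfolding bilinear_def by blast

lemmas bracket_simps =
  bilinear_ladd[OF bilinear] bilinear_radd[OF bilinear]
  bilinear_lmul[OF bilinear] bilinear_rmul[OF bilinear]
  bilinear_lsub[OF bilinear] bilinear_rsub[OF bilinear]
  bilinear_lneg[OF bilinear] bilinear_rneg[OF bilinear]
  bilinear_lzero[OF bilinear] bilinear_rzero[OF bilinear]

lemma bracket_self [simp]: "br x x = 0"
  using lie_algebra unfolding lie_algebra_def by blast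

lemma bracket_anticomm: "br y x = - br x y"
proof -
  have "0 = br (x + y) (x + y)"
    by simp
  also have "\<dots> = br x x + br y x + (br x y + br y y)"
    by (simp only: bilinear_ladd[OF bilinear] bilinear_radd[OF bilinear])
  also have "\<dots> = br y x + br x y"
    by simp
  finally have "br y x + br x y = 0"
    by (rule sym)
  then show ?thesis
    by (simp only: eq_neg_iff_add_eq_0)
qed

lemma jacobi: "br x (br y z) + br y (br z x) + br z (br x y) = 0"
  using lie_algebra unfolding lie_algebra_def by blast

lemma bracket_bracket_left: "br (br x y) w = br x (br y w) - br y (br x w)"
proof -
  have "br (br x y) w = - br w (br x y)"
    by (rule bracket_anticomm)
  also have "\<dots> = br x (br y w) + br y (br w x)"
    using jacobi[of x y w] by (metis eq_neg_iff_add_eq_0)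
  also have "br y (br w x) = - br y (br x w)"
    by (simp add: bracket_anticomm[of x w] bracket_simps)
  finally show ?thesis by simp
qed

lemma nilpotent_imp_center_nontrivial:
  assumes "nilpotent_lie br" and "(UNIV :: 'g set) \<noteq> {0}"
  obtains z where "z \<noteq> 0" and "\<And>x. br z x = 0"
proof -
  define k where "k = (LEAST k. lcs br k = {0})"
  have k: "lcs br k = {0}"
    using assms(1) unfolding nilpotent_lie_def k_def by (rule LeastI_ex)
  have "k \<noteq> 0"
    using k assms(2) by (metis lcs.simps(1))
  then obtain m where m: "k = Suc m"
    using not0_implies_Suc by blast
  have "lcs br m \<noteq> {0}"
    using not_less_Least[of m "\<lambda>k. lcs br k = {0}"] unfolding k_def[symmetric] m by simp
  moreover have "0 \<in> lcs br m"
    by (cases m) (simp_all add: span_zero)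
  ultimately obtain z where z: "z \<in> lcs br m" "z \<noteq> 0"
    by blast
  have "br x z \<in> lcs br k" for x
    using z(1) unfolding m lcs.simps by (blast intro: span_base)
  then have "br z x = 0" for x
    using k bracket_anticomm[of z x] by simp
  with z(2) show thesis
    by (rule that)
qed

end

definition multilinear_form :: "nat \<Rightarrow> ('g::real_vector list \<Rightarrow> real) \<Rightarrow> bool" where
  "multilinear_form n f \<longleftrightarrow> (\<forall>vs j a b u w. length vs = n \<longrightarrow> j < n \<longrightarrow>
      f (vs[j := a *\<^sub>R u + b *\<^sub>R w]) = a * f (vs[j := u]) + b * f (vs[j := w]))"

definition alternating_form :: "nat \<Rightarrow> ('g list \<Rightarrow> real) \<Rightarrow> bool" where
  "alternating_form n f \<longleftrightarrow>
     (\<forall>vs i j. length vs = n \<longrightarrow> i < n \<longrightarrow> j < n \<longrightarrow> i \<noteq> j \<longrightarrow> vs ! i = vs ! j \<longrightarrow> f vs = 0)"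

text \<open>For alternating \<open>f\<close> this says that the interior product \<open>\<iota>\<^sub>h f\<close> is zero.\<close>
definition vanishes_with :: "'g \<Rightarrow> nat \<Rightarrow> ('g list \<Rightarrow> real) \<Rightarrow> bool" where
  "vanishes_with h k f \<longleftrightarrow> (\<forall>vs. length vs = k \<longrightarrow> h \<in> set vs \<longrightarrow> f vs = 0)"

lemma multilinear_form_linear:
  assumes "multilinear_form n f" and "length vs = n" and "j < n"
  shows "linear (\<lambda>x. f (vs[j := x]))"
proof (rule linearI)
  fix x y show "f (vs[j := x + y]) = f (vs[j := x]) + f (vs[j := y])"
    using assms(1)[unfolded multilinear_form_def, rule_format, of vs j 1 x 1 y] assms(2,3) by simp
next
  fix c x show "f (vs[j := c *\<^sub>R x]) = c *\<^sub>R f (vs[j := x])"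
    using assms(1)[unfolded multilinear_form_def, rule_format, of vs j c x 0 x] assms(2,3) by simp
qed

lemma map_permuted_list_update:
  assumes "\<sigma> permutes {..<N}" and "length vs = N" and "j < N" and "m + n \<le> N"
  shows "map (\<lambda>i. vs[j := x] ! \<sigma> i) [m..<m+n] =
    (if m \<le> inv \<sigma> j \<and> inv \<sigma> j < m + n
     then (map (\<lambda>i. vs ! \<sigma> i) [m..<m+n])[inv \<sigma> j - m := x]
     else map (\<lambda>i. vs ! \<sigma> i) [m..<m+n])"
proof (rule nth_equalityI)
  have \<sigma>_bound: "\<sigma> i < N" if "i < N" for i
    using assms(1) that by (meson lessThan_iff permutes_in_image)
  have \<sigma>_eq: "\<sigma> i = j \<longleftrightarrow> i = inv \<sigma> j" for i
    using assms(1) by (metis permutes_inverses(1,2))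
  fix i assume "i < length (map (\<lambda>i. vs[j := x] ! \<sigma> i) [m..<m+n])"
  then have i: "i < n" by simp
  then have "map (\<lambda>i. vs[j := x] ! \<sigma> i) [m..<m+n] ! i =
      (if m + i = inv \<sigma> j then x else vs ! \<sigma> (m + i))"
    using assms \<sigma>_bound \<sigma>_eq[of "m + i"] by (auto simp: nth_list_update)
  then show "map (\<lambda>i. vs[j := x] ! \<sigma> i) [m..<m+n] ! i =
      (if m \<le> inv \<sigma> j \<and> inv \<sigma> j < m + n
       then (map (\<lambda>i. vs ! \<sigma> i) [m..<m+n])[inv \<sigma> j - m := x]
       else map (\<lambda>i. vs ! \<sigma> i) [m..<m+n]) ! i"
    using i by (auto simp: nth_list_update)
qed simp

lemma multilinear_wedge:
  assumes "multilinear_form k \<alpha>" and "multilinear_form l \<beta>"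
  shows "multilinear_form (k + l) (wedge k l \<alpha> \<beta>)"
  unfolding multilinear_form_def
proof (intro allI impI)
  fix vs :: "'a list" and j a b u w
  assume len: "length vs = k + l" and j: "j < k + l"
  let ?T = "\<lambda>x \<sigma>. of_int (sign \<sigma>) * \<alpha> (map (\<lambda>i. vs[j := x] ! \<sigma> i) [0..<k])
                      * \<beta> (map (\<lambda>i. vs[j := x] ! \<sigma> i) [k..<k+l])"
  have term_linear: "?T (a *\<^sub>R u + b *\<^sub>R w) \<sigma> = a * ?T u \<sigma> + b * ?T w \<sigma>"
    if \<sigma>: "\<sigma> permutes {..<k+l}" for \<sigma>
  proof -
    have i: "inv \<sigma> j < k + l"
      using \<sigma> j by (meson lessThan_iff permutes_in_image permutes_inv)
    have left: "map (\<lambda>i. vs[j := x] ! \<sigma> i) [0..<k] =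
      (if inv \<sigma> j < k then (map (\<lambda>i. vs ! \<sigma> i) [0..<k])[inv \<sigma> j := x]
       else map (\<lambda>i. vs ! \<sigma> i) [0..<k])" for x
      using map_permuted_list_update[OF \<sigma> len j, of 0 k x] by simp
    have right: "map (\<lambda>i. vs[j := x] ! \<sigma> i) [k..<k+l] =
      (if k \<le> inv \<sigma> j then (map (\<lambda>i. vs ! \<sigma> i) [k..<k+l])[inv \<sigma> j - k := x]
       else map (\<lambda>i. vs ! \<sigma> i) [k..<k+l])" for x
      using map_permuted_list_update[OF \<sigma> len j, of k l x] i by simp
    show ?thesis
      using assms i unfolding left right multilinear_form_def
      by (cases "inv \<sigma> j < k") (simp_all add: algebra_simps)
  qed
  have "(\<Sum>\<sigma> | \<sigma> permutes {..<k+l}. ?T (a *\<^sub>R u + b *\<^sub>R w) \<sigma>)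
      = a * (\<Sum>\<sigma> | \<sigma> permutes {..<k+l}. ?T u \<sigma>) + b * (\<Sum>\<sigma> | \<sigma> permutes {..<k+l}. ?T w \<sigma>)"
    by (simp add: term_linear sum.distrib sum_distrib_left)
  then show "wedge k l \<alpha> \<beta> (vs[j := a *\<^sub>R u + b *\<^sub>R w]) =
      a * wedge k l \<alpha> \<beta> (vs[j := u]) + b * wedge k l \<alpha> \<beta> (vs[j := w])"
    unfolding wedge_def by (simp add: add_divide_distrib)
qed

text \<open>Composing with the transposition of two equal arguments is a sign-reversing involution
  on the terms of the defining sum.\<close>
lemma alternating_wedge: "alternating_form (k + l) (wedge k l \<alpha> \<beta>)"
  unfolding alternating_form_def
proof (intro allI impI)
  fix vs :: "'a list" and i j
  assume ij: "i < k + l" "j < k + l" "i \<noteq> j" and eq: "vs ! i = vs ! j"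
  let ?S = "{\<sigma>. \<sigma> permutes {..<k+l}}"
  let ?T = "\<lambda>\<sigma>. of_int (sign \<sigma>) * \<alpha> (map (\<lambda>i. vs ! \<sigma> i) [0..<k])
                      * \<beta> (map (\<lambda>i. vs ! \<sigma> i) [k..<k+l])"
  define \<tau> where "\<tau> = Transposition.transpose i j"
  have \<tau>: "\<tau> permutes {..<k+l}"
    unfolding \<tau>_def using ij by (simp add: permutes_swap_id)
  have vs_\<tau>: "vs ! \<tau> m = vs ! m" for m
    unfolding \<tau>_def using eq by (cases "m = i"; cases "m = j") auto
  have bij: "bij_betw ((\<circ>) \<tau>) ?S ?S"
    by (rule bij_betwI[where g = "(\<circ>) \<tau>"])
      (auto simp: \<tau>_def fun_eq_iff permutes_compose[OF _ \<tau>[unfolded \<tau>_def]])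
  have "?T (\<tau> \<circ> \<sigma>) = - ?T \<sigma>" if "\<sigma> \<in> ?S" for \<sigma>
  proof -
    have "permutation \<sigma>" "permutation \<tau>"
      using that \<tau> permutation_permutes by auto
    then have "sign (\<tau> \<circ> \<sigma>) = - sign \<sigma>"
      using ij unfolding \<tau>_def by (simp add: sign_compose sign_swap_id)
    then show ?thesis by (simp add: vs_\<tau>)
  qed
  then have "sum ?T ?S = - sum ?T ?S"
    using sum.reindex_bij_betw[OF bij, of ?T] by (simp add: sum_negf)
  then show "wedge k l \<alpha> \<beta> vs = 0"
    unfolding wedge_def by simp
qed

lemma vanishes_with_wedge:
  assumes "vanishes_with h k \<alpha>" and "vanishes_with h l \<beta>"
  shows "vanishes_with h (k + l) (wedge k l \<alpha> \<beta>)"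
  unfolding vanishes_with_def
proof (intro allI impI)
  fix vs assume len: "length vs = k + l" and "h \<in> set vs"
  then obtain j where j: "j < k + l" "vs ! j = h"
    by (metis in_set_conv_nth)
  have "of_int (sign \<sigma>) * \<alpha> (map (\<lambda>i. vs ! \<sigma> i) [0..<k])
      * \<beta> (map (\<lambda>i. vs ! \<sigma> i) [k..<k+l]) = 0" if \<sigma>: "\<sigma> permutes {..<k+l}" for \<sigma>
  proof -
    have "inv \<sigma> j < k + l"
      using \<sigma> j by (meson lessThan_iff permutes_in_image permutes_inv)
    moreover have "\<sigma> (inv \<sigma> j) = j"
      using permutes_inverses[OF \<sigma>] by simp
    ultimately have "h \<in> set (map (\<lambda>i. vs ! \<sigma> i) [0..<k]) \<or> h \<in> set (map (\<lambda>i. vs ! \<sigma> i) [k..<k+l])"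
      using j by (cases "inv \<sigma> j < k") (auto simp: image_iff intro!: bexI[of _ "inv \<sigma> j"])
    then show ?thesis
      using assms unfolding vanishes_with_def by auto
  qed
  then show "wedge k l \<alpha> \<beta> vs = 0"
    unfolding wedge_def by (simp add: sum.neutral)
qed

lemma multilinear_wedge_pow2:
  assumes "multilinear_form 2 \<eta>"
  shows "multilinear_form (2 * n) (wedge_pow2 n \<eta>)"
proof (induction n)
  case 0
  then show ?case by (simp add: multilinear_form_def)
next
  case (Suc n)
  then show ?case using multilinear_wedge[OF assms Suc] by simp
qed

lemma vanishes_with_wedge_pow2:
  assumes "vanishes_with h 2 \<eta>"
  shows "vanishes_with h (2 * n) (wedge_pow2 n \<eta>)"
proof (induction n)
  case 0
  then show ?case by (simp add: vanishes_with_def)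
next
  case (Suc n)
  then show ?case using vanishes_with_wedge[OF assms Suc] by simp
qed

lemma alternating_form_update_eq_0:
  assumes "alternating_form N F" and "length vs = N" and "i < N" and "j < N" and "i \<noteq> j"
  shows "F (vs[j := vs ! i]) = 0"
  using assms(1)[unfolded alternating_form_def, rule_format, of "vs[j := vs ! i]" i j] assms(2-5)
  by simp

lemma alternating_form_nonzero_imp_distinct:
  assumes "alternating_form N F" and "length vs = N" and "F vs \<noteq> 0"
  shows "distinct vs"
proof (rule ccontr)
  assume "\<not> distinct vs"
  then obtain i j where "i < N" "j < N" "i \<noteq> j" "vs ! i = vs ! j"
    using assms(2) by (auto simp: distinct_conv_nth)
  then show False
    using assms unfolding alternating_form_def by blast
qed

lemma alternating_form_nonzero_imp_independent:
  assumes ml: "multilinear_form N F" and alt: "alternating_form N F"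
    and len: "length vs = N" and nonzero: "F vs \<noteq> 0"
  shows "independent (set vs)"
proof
  assume "dependent (set vs)"
  then obtain a where a: "a \<in> set vs" "a \<in> span (set vs - {a})"
    unfolding dependent_def by blast
  then obtain j where j: "j < N" "vs ! j = a"
    using len by (auto simp: in_set_conv_nth)
  have "F (vs[j := v]) = 0" if "v \<in> set vs - {a}" for v
    using that j len alternating_form_update_eq_0[OF alt len _ j(1)]
    by (auto simp: in_set_conv_nth)
  then have "F (vs[j := a]) = 0"
    using linear_eq_0_on_span[OF multilinear_form_linear[OF ml len j(1)] _ a(2)] by simp
  then show False
    using j nonzero by (metis list_update_id)
qed

text \<open>Expanding \<open>h\<close> in the basis \<open>vs\<close>, replacing the \<open>j\<close>-th argument by \<open>h\<close> picks out
  the \<open>j\<close>-th coordinate of \<open>h\<close> times \<open>F vs\<close>.\<close>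
lemma vanishes_with_top_form_imp_eq_0:
  fixes F :: "'a::euclidean_space list \<Rightarrow> real"
  assumes ml: "multilinear_form DIM('a) F" and alt: "alternating_form DIM('a) F"
    and len: "length vs = DIM('a)" and nonzero: "F vs \<noteq> 0"
    and vanishes: "vanishes_with h DIM('a) F"
  shows "h = 0"
proof -
  have distinct: "distinct vs"
    by (rule alternating_form_nonzero_imp_distinct[OF alt len nonzero])
  have "UNIV \<subseteq> span (set vs)"
    using alternating_form_nonzero_imp_independent[OF ml alt len nonzero] distinct len
    by (intro card_ge_dim_independent) (simp_all add: distinct_card)
  then obtain u where h: "h = (\<Sum>v\<in>set vs. u v *\<^sub>R v)"
    using span_finite[of "set vs"] by auto
  have "u (vs ! j) = 0" if j: "j < DIM('a)" for j
  proof -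
    let ?G = "\<lambda>x. F (vs[j := x])"
    have linear: "linear ?G"
      by (rule multilinear_form_linear[OF ml len j])
    have other: "?G v = 0" if "v \<in> set vs - {vs ! j}" for v
      using that len j alternating_form_update_eq_0[OF alt len _ j]
      by (auto simp: in_set_conv_nth)
    have "0 = ?G h"
      using vanishes len j unfolding vanishes_with_def by (simp add: set_update_memI)
    also have "\<dots> = (\<Sum>v\<in>set vs. u v * ?G v)"
      unfolding h by (simp add: linear_sum[OF linear] linear_scale[OF linear])
    also have "\<dots> = u (vs ! j) * ?G (vs ! j)"
      using j len other by (subst sum.remove[of _ "vs ! j"]) (simp_all add: sum.neutral)
    finally show ?thesis
      using nonzero by simp
  qed
  then show "h = 0"
    unfolding h using distinct len by (intro sum.neutral) (auto simp: in_set_conv_nth)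
qed

lemma multilinear_one_form: "linear \<omega> \<Longrightarrow> multilinear_form 1 (one_form \<omega>)"
  unfolding multilinear_form_def one_form_def by (auto simp: linear_add linear_scale)

lemma vanishes_with_one_form: "\<omega> h = 0 \<Longrightarrow> vanishes_with h 1 (one_form \<omega>)"
  unfolding vanishes_with_def one_form_def by (auto simp: length_Suc_conv)

context lie_bracket
begin

lemma multilinear_d_form:
  assumes "linear \<omega>"
  shows "multilinear_form 2 (d_form br \<omega>)"
  unfolding multilinear_form_def d_form_def
proof (intro allI impI)
  fix vs :: "'g list" and j :: nat and a b u w
  assume "length vs = 2" and "j < 2"
  then obtain x y where vs: "vs = [x, y]"
    by (auto simp: length_Suc_conv numeral_2_eq_2)
  have "j = 0 \<or> j = 1"
    using \<open>j < 2\<close> by auto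
  then show "- \<omega> (br (vs[j := a *\<^sub>R u + b *\<^sub>R w] ! 0) (vs[j := a *\<^sub>R u + b *\<^sub>R w] ! 1)) =
      a * - \<omega> (br (vs[j := u] ! 0) (vs[j := u] ! 1)) + b * - \<omega> (br (vs[j := w] ! 0) (vs[j := w] ! 1))"
    unfolding vs
    by (elim disjE) (simp_all add: bracket_simps linear_add[OF assms] linear_scale[OF assms])
qed

lemma vanishes_with_d_form:
  assumes "linear \<omega>" and "\<And>x. \<omega> (br h x) = 0"
  shows "vanishes_with h 2 (d_form br \<omega>)"
proof -
  have "\<omega> (br x h) = 0" for x
    using bracket_anticomm[of x h] assms by (simp add: linear_neg[OF assms(1)])
  then show ?thesis
    using assms(2) unfolding vanishes_with_def d_form_def
    by (auto simp: length_Suc_conv numeral_2_eq_2)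
qed

end

lemma contact_form_nondegenerate:
  fixes br :: "'g::euclidean_space \<Rightarrow> 'g \<Rightarrow> 'g"
  assumes "lie_algebra br" and dim: "DIM('g) = 2 * p + 1" and "contact_form br p \<omega>"
    and "\<omega> h = 0" and "\<And>x. \<omega> (br h x) = 0"
  shows "h = 0"
proof -
  interpret lie_bracket br by unfold_locales fact
  obtain vs where \<omega>: "linear \<omega>" and len: "length vs = 2 * p + 1"
    and nonzero: "wedge 1 (2 * p) (one_form \<omega>) (wedge_pow2 p (d_form br \<omega>)) vs \<noteq> 0"
    using assms(3) unfolding contact_form_def by blast
  let ?F = "wedge 1 (2 * p) (one_form \<omega>) (wedge_pow2 p (d_form br \<omega>))"
  have "multilinear_form (1 + 2 * p) ?F"
    by (intro multilinear_wedge multilinear_wedge_pow2 multilinear_one_form multilinear_d_form \<omega>)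
  moreover have "alternating_form (1 + 2 * p) ?F"
    by (rule alternating_wedge)
  moreover have "vanishes_with h (1 + 2 * p) ?F"
    using assms(4,5)
    by (intro vanishes_with_wedge vanishes_with_wedge_pow2 vanishes_with_one_form vanishes_with_d_form \<omega>)
  ultimately show "h = 0"
    using vanishes_with_top_form_imp_eq_0[of ?F vs h] dim len nonzero by simp
qed

lemma inner_adjoint_one:
  fixes f :: "'a::euclidean_space \<Rightarrow> real"
  assumes "linear f"
  shows "adjoint f 1 \<bullet> x = f x"
  using adjoint_works[OF assms, of x 1] by (simp add: inner_commute)

text \<open>The hyperplane orthogonal to \<open>z\<close> models \<open>\<gg>/\<real>z\<close>, with quotient map \<open>proj\<close>;
  on it \<open>\<Omega>(a, w) = \<omega> [a, w]\<close> is nondegenerate.\<close>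
locale symplectic_quotient = lie_bracket br
  for br :: "'g::euclidean_space \<Rightarrow> 'g \<Rightarrow> 'g" +
  fixes \<omega> :: "'g \<Rightarrow> real" and z :: 'g
  assumes linear_\<omega>: "linear \<omega>"
    and z_nonzero: "z \<noteq> 0"
    and z_central: "\<And>x. br z x = 0"
    and radical_subset_span: "\<And>h. (\<And>x. \<omega> (br h x) = 0) \<Longrightarrow> h \<in> span {z}"
begin

lemmas \<omega>_simps = linear_add[OF linear_\<omega>] linear_scale[OF linear_\<omega>]
  linear_diff[OF linear_\<omega>] linear_neg[OF linear_\<omega>] linear_0[OF linear_\<omega>]

lemma bracket_z_right: "br x z = 0"
  using z_central bracket_anticomm[of x z] by simp

lemma inner_z_z_nonzero [simp]: "z \<bullet> z \<noteq> 0"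
  using z_nonzero by simp

definition proj :: "'g \<Rightarrow> 'g" where
  "proj x = x - (x \<bullet> z / (z \<bullet> z)) *\<^sub>R z"

lemma proj_orthogonal: "proj x \<bullet> z = 0"
  unfolding proj_def by (simp add: inner_diff_left)

lemma proj_eq_self: "x \<bullet> z = 0 \<Longrightarrow> proj x = x"
  unfolding proj_def by simp

lemma linear_proj: "linear proj"
  by (rule linearI)
    (simp_all add: proj_def algebra_simps add_divide_distrib)

lemmas proj_simps = linear_add[OF linear_proj] linear_scale[OF linear_proj] linear_0[OF linear_proj]

lemma range_proj: "range proj = {x. x \<bullet> z = 0}"
  using proj_orthogonal proj_eq_self by auto (metis rangeI)

lemma proj_eq_0_iff: "proj x = 0 \<longleftrightarrow> x \<in> span {z}"
  unfolding proj_def span_singleton by (auto simp: image_iff)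

lemma bracket_proj_left: "br (proj u) x = br u x"
  unfolding proj_def by (simp add: bracket_simps z_central)

lemma bracket_proj_right: "br x (proj u) = br x u"
  unfolding proj_def by (simp add: bracket_simps bracket_z_right)

lemma orthogonal_radical_eq_0:
  assumes "a \<bullet> z = 0" and "\<And>w. \<omega> (br a w) = 0"
  shows "a = 0"
  using radical_subset_span[OF assms(2)] assms(1) proj_eq_0_iff proj_eq_self by metis

lemma orthogonal_eqI:
  assumes "a \<bullet> z = 0" and "b \<bullet> z = 0" and "\<And>w. \<omega> (br a w) = \<omega> (br b w)"
  shows "a = b"
  using orthogonal_radical_eq_0[of "a - b"] assms
  by (simp add: inner_diff_left bracket_simps \<omega>_simps)

lemma ex_orthogonal_contraction:
  assumes "linear c" and "c z = 0"
  shows "\<exists>a. a \<bullet> z = 0 \<and> (\<forall>w. \<omega> (br a w) = c w)"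
proof -
  define M where "M a = adjoint (\<lambda>w. \<omega> (br a w)) 1" for a
  have M: "M a \<bullet> w = \<omega> (br a w)" for a w
    unfolding M_def
    by (rule inner_adjoint_one) (simp add: linear_compose[OF linear_bracket_right linear_\<omega>, unfolded o_def])
  have Mz: "M a \<bullet> z = 0" for a
    by (simp add: M bracket_z_right \<omega>_simps)
  define T where "T a = M a + (a \<bullet> z) *\<^sub>R z" for a
  have "linear T"
  proof (rule linearI)
    fix x y
    have "T (x + y) \<bullet> v = (T x + T y) \<bullet> v" for v
      by (simp add: T_def M bracket_simps \<omega>_simps algebra_simps)
    then show "T (x + y) = T x + T y"
      using vector_eq_rdot by blast
  next
    fix r x
    have "T (r *\<^sub>R x) \<bullet> v = (r *\<^sub>R T x) \<bullet> v" for v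
      by (simp add: T_def M bracket_simps \<omega>_simps algebra_simps)
    then show "T (r *\<^sub>R x) = r *\<^sub>R T x"
      using vector_eq_rdot by blast
  qed
  have T_inner_z: "T a \<bullet> z = (a \<bullet> z) * (z \<bullet> z)" for a
    by (simp add: T_def inner_add_left Mz)
  have "inj T"
    unfolding linear_injective_0[OF \<open>linear T\<close>]
  proof (intro allI impI)
    fix a assume "T a = 0"
    moreover from this have "a \<bullet> z = 0"
      using T_inner_z[of a] z_nonzero by simp
    ultimately have "M a = 0"
      unfolding T_def by simp
    then show "a = 0"
      using \<open>a \<bullet> z = 0\<close> M orthogonal_radical_eq_0 by (metis inner_zero_left)
  qed
  then obtain a where a: "T a = adjoint c 1"
    using linear_inj_imp_surj[OF \<open>linear T\<close>] by (metis surjD)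
  have "a \<bullet> z = 0"
    using T_inner_z[of a] inner_adjoint_one[OF assms(1), of z] assms(2) z_nonzero by (simp add: a)
  moreover have "\<omega> (br a w) = c w" for w
    using a inner_adjoint_one[OF assms(1), of w] \<open>a \<bullet> z = 0\<close> unfolding T_def by (simp add: M[symmetric])
  ultimately show ?thesis
    by blast
qed

definition nabla :: "'g \<Rightarrow> 'g \<Rightarrow> 'g" where
  "nabla x y = (SOME a. a \<bullet> z = 0 \<and> (\<forall>w. \<omega> (br a w) = - \<omega> (br y (br x w))))"

lemma nabla_orthogonal_contraction:
  "nabla x y \<bullet> z = 0 \<and> (\<forall>w. \<omega> (br (nabla x y) w) = - \<omega> (br y (br x w)))"
proof -
  have "linear (\<lambda>w. - \<omega> (br y (br x w)))"
    by (intro linearI) (simp_all add: bracket_simps \<omega>_simps)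
  moreover have "- \<omega> (br y (br x z)) = 0"
    by (simp add: bracket_z_right bracket_simps \<omega>_simps)
  ultimately have "\<exists>a. a \<bullet> z = 0 \<and> (\<forall>w. \<omega> (br a w) = - \<omega> (br y (br x w)))"
    by (rule ex_orthogonal_contraction)
  then show ?thesis
    unfolding nabla_def by (rule someI_ex)
qed

lemma nabla_orthogonal: "nabla x y \<bullet> z = 0"
  using nabla_orthogonal_contraction by blast

lemma contraction_nabla: "\<omega> (br (nabla x y) w) = - \<omega> (br y (br x w))"
  using nabla_orthogonal_contraction by blast

lemma nabla_linear_left: "nabla (a *\<^sub>R x + b *\<^sub>R y) w = a *\<^sub>R nabla x w + b *\<^sub>R nabla y w"
  by (rule orthogonal_eqI)
    (simp_all add: nabla_orthogonal contraction_nabla bracket_simps \<omega>_simps algebra_simps)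

lemma nabla_linear_right: "nabla w (a *\<^sub>R x + b *\<^sub>R y) = a *\<^sub>R nabla w x + b *\<^sub>R nabla w y"
  by (rule orthogonal_eqI)
    (simp_all add: nabla_orthogonal contraction_nabla bracket_simps \<omega>_simps algebra_simps)

lemma nabla_torsion_free: "nabla x y - nabla y x = proj (br x y)"
  by (rule orthogonal_eqI)
    (simp_all add: nabla_orthogonal proj_orthogonal inner_diff_left contraction_nabla
      bracket_proj_left bracket_bracket_left bracket_simps \<omega>_simps)

lemma nabla_flat: "nabla x (nabla y w) - nabla y (nabla x w) = nabla (proj (br x y)) w"
  by (rule orthogonal_eqI)
    (simp_all add: nabla_orthogonal inner_diff_left contraction_nabla
      bracket_proj_left bracket_bracket_left bracket_simps \<omega>_simps)

lemma lie_algebra_on_orthogonal: "lie_algebra_on {x. x \<bullet> z = 0} (\<lambda>x y. proj (br x y))"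
  unfolding lie_algebra_on_def
proof (intro conjI ballI allI)
  fix x y w
  show "proj (br x (proj (br y w))) + proj (br y (proj (br w x))) + proj (br w (proj (br x y))) = 0"
    using jacobi[of x y w] by (simp add: bracket_proj_right proj_simps flip: linear_add[OF linear_proj])
qed (simp_all add: subspace_hyperplane2 proj_orthogonal bracket_simps proj_simps)

lemma affine_structure_on_orthogonal:
  "affine_structure_on {x. x \<bullet> z = 0} (\<lambda>x y. proj (br x y)) nabla"
  unfolding affine_structure_on_def
  by (simp add: nabla_orthogonal nabla_linear_left nabla_linear_right nabla_torsion_free nabla_flat)

end

lemma symplectic_quotient_if_contact:
  fixes br :: "'g::euclidean_space \<Rightarrow> 'g \<Rightarrow> 'g"
  assumes "lie_algebra br" and "DIM('g) = 2 * p + 1" and "contact_form br p \<omega>"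
    and "z \<noteq> 0" and central: "\<And>x. br z x = 0"
  shows "symplectic_quotient br \<omega> z"
proof -
  interpret lie_bracket br by unfold_locales fact
  have \<omega>: "linear \<omega>"
    using assms(3) unfolding contact_form_def by blast
  have "\<omega> z \<noteq> 0"
  proof
    assume "\<omega> z = 0"
    then have "z = 0"
      by (rule contact_form_nondegenerate[OF assms(1-3)]) (simp add: central linear_0[OF \<omega>])
    with assms(4) show False
      by simp
  qed
  have radical: "h \<in> span {z}" if "\<And>x. \<omega> (br h x) = 0" for h
  proof -
    have "h - (\<omega> h / \<omega> z) *\<^sub>R z = 0"
      using \<open>\<omega> z \<noteq> 0\<close> that central
      by (intro contact_form_nondegenerate[OF assms(1-3)])
        (simp_all add: linear_diff[OF \<omega>] linear_scale[OF \<omega>] bracket_simps)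
    then show ?thesis
      by (metis eq_iff_diff_eq_0 span_base span_scale singletonI)
  qed
  show ?thesis
    by (intro symplectic_quotient.intro symplectic_quotient_axioms.intro lie_bracket_axioms
        \<omega> assms(4) central radical)
qed

theorem mainTheorem2:
  fixes br :: "'g::euclidean_space \<Rightarrow> 'g \<Rightarrow> 'g" and p :: nat and \<omega> :: "'g \<Rightarrow> real"
  assumes "lie_algebra br"
    and "nilpotent_lie br"
    and "DIM('g) = 2*p+1"
    and "contact_form br p \<omega>"
  shows "\<exists>(V::'g set) (H::'g set) brh (\<pi>::'g \<Rightarrow> 'g) nab.
           subspace V \<and> dim V = 1 \<and> (\<forall>v\<in>V. \<forall>x. br v x = 0) \<and>
           lie_algebra_on H brh \<and>
           linear \<pi> \<and> range \<pi> = H \<and> {x. \<pi> x = 0} = V \<and>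
           (\<forall>x y. \<pi> (br x y) = brh (\<pi> x) (\<pi> y)) \<and>
           affine_structure_on H brh nab"
proof -
  interpret lie_bracket br by unfold_locales fact
  have "(UNIV :: 'g set) \<noteq> {0}"
    using nonzero_Basis SOME_Basis by blast
  then obtain z where "z \<noteq> 0" and central: "\<And>x. br z x = 0"
    using nilpotent_imp_center_nontrivial[OF assms(2)] by blast
  then interpret symplectic_quotient br \<omega> z
    using symplectic_quotient_if_contact[OF assms(1,3,4)] by blast
  have "subspace (span {z})" and "dim (span {z}) = 1"
    using \<open>z \<noteq> 0\<close> by simp_all
  moreover have "\<forall>v\<in>span {z}. \<forall>x. br v x = 0"
    by (auto simp: span_singleton bracket_simps central)
  moreover have "{x. proj x = 0} = span {z}"
    using proj_eq_0_iff by blast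
  moreover have "\<forall>x y. proj (br x y) = proj (br (proj x) (proj y))"
    by (simp add: bracket_proj_left bracket_proj_right)
  ultimately show ?thesis
    using lie_algebra_on_orthogonal linear_proj range_proj affine_structure_on_orthogonal by blast
qed

end
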